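(* Let $n\geq 2$ and let $C$ be a $2$-null CRC in $G_n$ with covering radius $\rho\geq 2$, $c_1\leq 2$, $c_2\geq 3$, and $\mathbf{0}\in C$. Then every word of type $1100$ lying in $C_2$ belongs to the interval graph $I(y)$ of some word $y\in C$ of weight four.
   Context: $G_n$ is the graph with vertex set $\mathbb{Z}^n$, $x\sim y$ iff $\sum_i|x_i-y_i|=1$; $d$ is its graph distance, weight of $x$ is $d(x,\mathbf{0})$. For a code $C$ with covering radius $\rho$, $C_i=\{v:d(v,C)=i\}$. $C$ is a CRC if for all $i,j$ every vertex of $C_i$ has the same number $\alpha_{ij}$ of neighbours in $C_j$, with $\alpha_{ij}=0$ for $|i-j|>1$; $a_i=\alpha_{ii}$, $b_i=\alpha_{i,i+1}$, $c_i=\alpha_{i,i-1}$. $C$ is $r$-null if $a_0=\cdots=a_{r-1}=0$. The type of a word of weight at most four is the nonincreasing sequence of its four largest absolute entry values; type $1100$ means exactly two entries $\pm1$, rest $0$. For a vertex $y$, the interval graph $I(y)$ is the subgraph of $G_n$ induced by $\{z: d(\mathbf{0},z)+d(z,y)=d(\mathbf{0},y)\}$. *)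

theory Defs
  imports "HOL-Analysis.Analysis"
begin

text \<open>The graph G_n: vertex set Z^n (here int^'n with n = CARD('n)),
  x ~ y iff sum_i |x_i - y_i| = 1.\<close>

definition gadj :: "(int^'n) \<Rightarrow> (int^'n) \<Rightarrow> bool" where
  "gadj x y \<longleftrightarrow> (\<Sum>i\<in>UNIV. \<bar>x $ i - y $ i\<bar>) = 1"

definition gedges :: "((int^'n) \<times> (int^'n)) set" where
  "gedges = {(x, y). gadj x y}"

definition gdist :: "(int^'n) \<Rightarrow> (int^'n) \<Rightarrow> nat" where
  "gdist x y = (LEAST k. (x, y) \<in> gedges ^^ k)"

definition nbrs :: "(int^'n) \<Rightarrow> (int^'n) set" where
  "nbrs x = {y. gadj x y}"

definition weight :: "(int^'n) \<Rightarrow> nat" where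
  "weight x = gdist x 0"

definition cdist :: "(int^'n) set \<Rightarrow> (int^'n) \<Rightarrow> nat" where
  "cdist C v = (LEAST k. \<exists>c\<in>C. gdist v c = k)"

definition covering_radius :: "(int^'n) set \<Rightarrow> nat \<Rightarrow> bool" where
  "covering_radius C \<rho> \<longleftrightarrow> C \<noteq> {} \<and> (\<forall>v. cdist C v \<le> \<rho>) \<and> (\<exists>v. cdist C v = \<rho>)"

definition layer :: "(int^'n) set \<Rightarrow> nat \<Rightarrow> (int^'n) set" where
  "layer C i = {v. cdist C v = i}"

definition alpha :: "(int^'n) set \<Rightarrow> nat \<Rightarrow> nat \<Rightarrow> nat" where
  "alpha C i j = (THE k. \<forall>v\<in>layer C i. card (nbrs v \<inter> layer C j) = k)"

definition is_CRC :: "(int^'n) set \<Rightarrow> nat \<Rightarrow> bool" where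
  "is_CRC C \<rho> \<longleftrightarrow> covering_radius C \<rho> \<and>
     (\<forall>i\<le>\<rho>. \<forall>j\<le>\<rho>. \<exists>k. \<forall>v\<in>layer C i. card (nbrs v \<inter> layer C j) = k) \<and>
     (\<forall>i\<le>\<rho>. \<forall>j\<le>\<rho>. (i > j + 1 \<or> j > i + 1) \<longrightarrow> alpha C i j = 0)"

definition crc_a :: "(int^'n) set \<Rightarrow> nat \<Rightarrow> nat" where "crc_a C i = alpha C i i"
definition crc_b :: "(int^'n) set \<Rightarrow> nat \<Rightarrow> nat" where "crc_b C i = alpha C i (i + 1)"
definition crc_c :: "(int^'n) set \<Rightarrow> nat \<Rightarrow> nat" where "crc_c C i = alpha C i (i - 1)"

definition r_null :: "(int^'n) set \<Rightarrow> nat \<Rightarrow> bool" where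
  "r_null C r \<longleftrightarrow> (\<forall>i<r. crc_a C i = 0)"

definition type_1100 :: "(int^'n) \<Rightarrow> bool" where
  "type_1100 x \<longleftrightarrow> card {i. \<bar>x $ i\<bar> = 1} = 2 \<and> (\<forall>i. x $ i \<noteq> 0 \<longrightarrow> \<bar>x $ i\<bar> = 1)"

definition interval :: "(int^'n) \<Rightarrow> (int^'n) set" where
  "interval y = {z. gdist 0 z + gdist z y = gdist 0 y}"

end

(*
  Distances in G_n are l1-distances. A word x of type 1100 has weight 2 and only two
  neighbours of weight 1, so c_2 \<ge> 3 gives a neighbour z \<in> C_1 of weight 3. Any codeword
  of weight 4 next to z is at distance 2 from x, so x lies in its interval. Otherwise all
  codewords next to z have weight 2. For distinct lower neighbours u, u' of z the word
  u + u' - z has weight 1, hence lies in C_1 (as 0 \<in> C and a_0 = 0) and is adjacent to 0, u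
  and u'. With u = x and u' a codeword this gives c_1 \<ge> 2, so z has two codeword
  neighbours, and taking these as u, u' gives c_1 \<ge> 3.
*)
theory Submission
  imports Defs
begin

definition l1norm :: "int^'n \<Rightarrow> int" where
  "l1norm v = (\<Sum>i\<in>UNIV. \<bar>v $ i\<bar>)"

lemma l1norm_nonneg: "l1norm v \<ge> 0"
  unfolding l1norm_def by (simp add: sum_nonneg)

lemma l1norm_zero [simp]: "l1norm 0 = 0"
  by (simp add: l1norm_def)

lemma l1norm_uminus [simp]: "l1norm (- v) = l1norm v"
  unfolding l1norm_def by simp

lemma l1norm_minus_commute: "l1norm (x - y) = l1norm (y - x)"
  by (metis l1norm_uminus minus_diff_eq)

lemma l1norm_triangle_ineq: "l1norm (x + y) \<le> l1norm x + l1norm y"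
  unfolding l1norm_def sum.distrib[symmetric] by (rule sum_mono) (simp add: abs_triangle_ineq)

lemma l1norm_eq_0_iff: "l1norm v = 0 \<longleftrightarrow> v = 0"
  unfolding l1norm_def by (simp add: sum_nonneg_eq_0_iff vec_eq_iff)

lemma l1norm_remove: "l1norm v = \<bar>v $ k\<bar> + (\<Sum>i\<in>UNIV - {k}. \<bar>v $ i\<bar>)"
  unfolding l1norm_def by (rule sum.remove) auto

lemma l1norm_add_axis: "l1norm (v + axis k s) = l1norm v - \<bar>v $ k\<bar> + \<bar>v $ k + s\<bar>"
proof -
  have "(\<Sum>i\<in>UNIV - {k}. \<bar>(v + axis k s) $ i\<bar>) = (\<Sum>i\<in>UNIV - {k}. \<bar>v $ i\<bar>)"
    by (rule sum.cong) (auto simp: axis_def)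
  then show ?thesis
    using l1norm_remove[of "v + axis k s" k] l1norm_remove[of v k] by simp
qed

lemma l1norm_axis: "l1norm (axis k s) = \<bar>s\<bar>"
  using l1norm_add_axis[of 0 k s] by (simp add: l1norm_def)

lemma l1norm_eq_1_iff: "l1norm t = 1 \<longleftrightarrow> (\<exists>k s. \<bar>s\<bar> = 1 \<and> t = axis k s)"
proof
  assume t: "l1norm t = 1"
  then obtain k where k: "t $ k \<noteq> 0"
    using l1norm_eq_0_iff by (metis vec_eq_iff zero_index zero_neq_one)
  have "(\<Sum>i\<in>UNIV - {k}. \<bar>t $ i\<bar>) \<ge> 0" by (simp add: sum_nonneg)
  then have tk: "\<bar>t $ k\<bar> = 1" and "(\<Sum>i\<in>UNIV - {k}. \<bar>t $ i\<bar>) = 0"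
    using l1norm_remove[of t k] t k by linarith+
  then have "\<forall>i\<in>UNIV - {k}. t $ i = 0"
    by (subst (asm) sum_nonneg_eq_0_iff) auto
  then have "t = axis k (t $ k)"
    by (auto simp: vec_eq_iff axis_def)
  with tk show "\<exists>k s. \<bar>s\<bar> = 1 \<and> t = axis k s" by blast
qed (auto simp: l1norm_axis)

lemma gadj_iff_l1norm: "gadj x y \<longleftrightarrow> l1norm (x - y) = 1"
  unfolding gadj_def l1norm_def by simp

lemma gadj_sym: "gadj x y \<longleftrightarrow> gadj y x"
  by (simp add: gadj_iff_l1norm l1norm_minus_commute)

lemma gadj_iff_axis: "gadj x y \<longleftrightarrow> (\<exists>k s. \<bar>s\<bar> = 1 \<and> y = x + axis k s)"
  unfolding gadj_iff_l1norm l1norm_minus_commute[of x] l1norm_eq_1_iff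
  by (metis add_diff_cancel_left' diff_add_cancel add.commute)

lemma gedges_relpow_imp_l1norm_le: "(x, y) \<in> gedges ^^ m \<Longrightarrow> l1norm (x - y) \<le> int m"
proof (induction m arbitrary: y)
  case 0
  then show ?case by (simp add: l1norm_def)
next
  case (Suc m)
  then obtain u where u: "(x, u) \<in> gedges ^^ m" "gadj u y"
    by (auto simp: gedges_def)
  have "l1norm (x - y) \<le> l1norm (x - u) + l1norm (u - y)"
    using l1norm_triangle_ineq[of "x - u" "u - y"] by simp
  with Suc.IH[OF u(1)] u(2) show ?case by (simp add: gadj_iff_l1norm)
qed

lemma l1norm_imp_gedges_relpow: "l1norm (x - y) = int m \<Longrightarrow> (x, y) \<in> gedges ^^ m"
proof (induction m arbitrary: x)
  case 0
  then show ?case by (simp add: l1norm_eq_0_iff)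
next
  case (Suc m)
  then obtain k where k: "(x - y) $ k \<noteq> 0"
    using l1norm_eq_0_iff by (metis of_nat_Suc vec_eq_iff zero_index add_eq_0_iff_both_eq_0 of_nat_eq_0_iff one_neq_zero)
  define s where "s = - sgn ((x - y) $ k)"
  have s: "\<bar>s\<bar> = 1" using k by (simp add: s_def abs_sgn)
  have "\<bar>(x - y) $ k + s\<bar> = \<bar>(x - y) $ k\<bar> - 1"
    using k unfolding s_def by (cases "(x - y) $ k > 0") (auto simp: sgn_if)
  then have "l1norm ((x + axis k s) - y) = int m"
    using l1norm_add_axis[of "x - y" k s] Suc.prems by (simp add: algebra_simps)
  then have "(x + axis k s, y) \<in> gedges ^^ m" by (rule Suc.IH)
  with s show ?case
    by (intro relpow_Suc_I2[of x "x + axis k s"]) (auto simp: gedges_def gadj_iff_axis)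
qed

lemma gdist_eq_l1norm: "gdist x y = nat (l1norm (x - y))"
  unfolding gdist_def
proof (rule Least_equality)
  show "(x, y) \<in> gedges ^^ nat (l1norm (x - y))"
    by (rule l1norm_imp_gedges_relpow) (simp add: l1norm_nonneg)
next
  show "nat (l1norm (x - y)) \<le> m" if "(x, y) \<in> gedges ^^ m" for m
    using gedges_relpow_imp_l1norm_le[OF that] by simp
qed

lemma gadj_iff_gdist: "gadj x y \<longleftrightarrow> gdist x y = 1"
  by (simp add: gadj_iff_l1norm gdist_eq_l1norm nat_eq_iff l1norm_nonneg)

lemma weight_eq_l1norm: "weight x = nat (l1norm x)"
  by (simp add: weight_def gdist_eq_l1norm)

lemma mem_interval_iff: "x \<in> interval y \<longleftrightarrow> l1norm x + l1norm (y - x) = l1norm y"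
proof -
  have "gdist 0 x + gdist x y = gdist 0 y \<longleftrightarrow> nat (l1norm x) + nat (l1norm (y - x)) = nat (l1norm y)"
    by (simp add: gdist_eq_l1norm l1norm_minus_commute[of x])
  also have "\<dots> \<longleftrightarrow> l1norm x + l1norm (y - x) = l1norm y"
    using l1norm_nonneg[of x] l1norm_nonneg[of "y - x"] l1norm_nonneg[of y] by linarith
  finally show ?thesis by (simp add: interval_def)
qed

lemma mem_intervalI: "l1norm (y - x) \<le> l1norm y - l1norm x \<Longrightarrow> x \<in> interval y"
  using l1norm_triangle_ineq[of x "y - x"] by (simp add: mem_interval_iff)

lemma finite_nbrs: "finite (nbrs v)"
proof -
  have "nbrs v \<subseteq> (\<lambda>(k, s). v + axis k s) ` (UNIV \<times> {-1, 1})"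
    by (force simp: nbrs_def gadj_iff_axis abs_eq_iff)
  then show ?thesis by (rule finite_subset) simp
qed

lemma gadj_l1norm_cases:
  assumes "gadj z y"
  shows "l1norm y = l1norm z + 1 \<or> l1norm y = l1norm z - 1"
proof -
  obtain k s where "\<bar>s\<bar> = 1" "y = z + axis k s"
    using assms by (auto simp: gadj_iff_axis)
  then show ?thesis using l1norm_add_axis[of z k s] by arith
qed

lemma lower_nbrs_square:
  assumes "gadj z y" "gadj z y'" "y \<noteq> y'"
    and "l1norm y = l1norm z - 1" "l1norm y' = l1norm z - 1"
  shows "l1norm (y + y' - z) = l1norm z - 2" "gadj (y + y' - z) y" "gadj (y + y' - z) y'"
proof -
  obtain k s where ks: "\<bar>s\<bar> = 1" "y = z + axis k s"
    using assms(1) by (auto simp: gadj_iff_axis)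
  obtain k' s' where ks': "\<bar>s'\<bar> = 1" "y' = z + axis k' s'"
    using assms(2) by (auto simp: gadj_iff_axis)
  have down: "\<bar>z $ k + s\<bar> = \<bar>z $ k\<bar> - 1" "\<bar>z $ k' + s'\<bar> = \<bar>z $ k'\<bar> - 1"
    using assms(4,5) l1norm_add_axis[of z k s] l1norm_add_axis[of z k' s'] ks ks' by simp_all
  have "k \<noteq> k'"
  proof
    assume "k = k'"
    with ks ks' assms(3) have "s \<noteq> s'" by auto
    with ks(1) ks'(1) have "s' = - s" by arith
    with down \<open>k = k'\<close> have "\<bar>z $ k - s\<bar> = \<bar>z $ k\<bar> - 1" "\<bar>z $ k + s\<bar> = \<bar>z $ k\<bar> - 1"
      by simp_all
    with ks(1) show False by arith
  qed
  then have "y $ k' = z $ k'" using ks(2) by (simp add: axis_def)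
  have "l1norm (y + y' - z) = l1norm (y + axis k' s')"
    using ks'(2) by (simp add: algebra_simps)
  also have "\<dots> = l1norm y - \<bar>z $ k'\<bar> + \<bar>z $ k' + s'\<bar>"
    using \<open>y $ k' = z $ k'\<close> by (simp add: l1norm_add_axis)
  finally show "l1norm (y + y' - z) = l1norm z - 2"
    using down(2) assms(4) by simp
  show "gadj (y + y' - z) y" "gadj (y + y' - z) y'"
    using assms(1,2) by (simp_all add: gadj_iff_l1norm l1norm_minus_commute)
qed

lemma card_lower_nbrs_le_support:
  "card {v \<in> nbrs x. l1norm v < l1norm x} \<le> card {k. x $ k \<noteq> 0}"
proof -
  have "{v \<in> nbrs x. l1norm v < l1norm x} \<subseteq> (\<lambda>k. x - axis k (sgn (x $ k))) ` {k. x $ k \<noteq> 0}"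
  proof safe
    fix v assume "v \<in> nbrs x" "l1norm v < l1norm x"
    then obtain k s where ks: "\<bar>s\<bar> = 1" "v = x + axis k s" "\<bar>x $ k + s\<bar> < \<bar>x $ k\<bar>"
      by (auto simp: nbrs_def gadj_iff_axis l1norm_add_axis)
    then have "x $ k \<noteq> 0" "s = - sgn (x $ k)"
      by (auto simp: sgn_if abs_if split: if_splits)
    with ks(2) show "v \<in> (\<lambda>k. x - axis k (sgn (x $ k))) ` {k. x $ k \<noteq> 0}"
      by (auto simp: axis_def vec_eq_iff)
  qed
  then show ?thesis
    using card_image_le[of "{k. x $ k \<noteq> 0}" "\<lambda>k. x - axis k (sgn (x $ k))"]
    by (meson card_mono finite finite_imageI le_trans)
qed

lemma type_1100_support: "type_1100 x \<Longrightarrow> {k. x $ k \<noteq> 0} = {k. \<bar>x $ k\<bar> = 1}"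
  unfolding type_1100_def by auto

lemma type_1100_l1norm: "type_1100 x \<Longrightarrow> l1norm x = 2"
proof -
  assume x: "type_1100 x"
  then have "\<bar>x $ i\<bar> = (if \<bar>x $ i\<bar> = 1 then 1 else 0)" for i
    by (auto simp: type_1100_def)
  then have "l1norm x = (\<Sum>i\<in>UNIV. if \<bar>x $ i\<bar> = 1 then 1 else 0)"
    unfolding l1norm_def by (metis (no_types, lifting))
  also have "\<dots> = int (card {i. \<bar>x $ i\<bar> = 1})"
    by (simp add: sum.If_cases)
  also have "\<dots> = 2"
    using x by (simp add: type_1100_def)
  finally show ?thesis .
qed

lemma is_CRC_nonempty: "is_CRC C \<rho> \<Longrightarrow> C \<noteq> {}"
  by (simp add: is_CRC_def covering_radius_def)

lemma cdist_attained: "C \<noteq> {} \<Longrightarrow> \<exists>c\<in>C. gdist v c = cdist C v"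
  unfolding cdist_def by (rule LeastI_ex) blast

lemma cdist_le_gdist: "c \<in> C \<Longrightarrow> cdist C v \<le> gdist v c"
  unfolding cdist_def by (rule Least_le) blast

lemma cdist_eq_0_iff: "C \<noteq> {} \<Longrightarrow> cdist C v = 0 \<longleftrightarrow> v \<in> C"
  using cdist_attained[of C v] cdist_le_gdist[of v C v]
  by (auto simp: gdist_eq_l1norm l1norm_eq_0_iff nat_eq_iff l1norm_nonneg)

lemma layer_0: "C \<noteq> {} \<Longrightarrow> layer C 0 = C"
  by (auto simp: layer_def cdist_eq_0_iff)

lemma is_CRC_card_nbrs:
  assumes "is_CRC C \<rho>" "i \<le> \<rho>" "j \<le> \<rho>" "v \<in> layer C i"
  shows "card (nbrs v \<inter> layer C j) = alpha C i j"
proof -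
  obtain k where k: "\<forall>u\<in>layer C i. card (nbrs u \<inter> layer C j) = k"
    using assms(1-3) unfolding is_CRC_def by blast
  then have "alpha C i j = k"
    unfolding alpha_def using assms(4) by (intro the_equality) auto
  with k assms(4) show ?thesis by simp
qed

lemma is_CRC_card_code_nbrs:
  assumes "is_CRC C \<rho>" "1 \<le> \<rho>" "v \<in> layer C 1"
  shows "card (nbrs v \<inter> C) = crc_c C 1"
  using is_CRC_card_nbrs[of C \<rho> 1 0 v] assms
  by (simp add: crc_c_def layer_0 is_CRC_nonempty)

lemma nbr_of_codeword_in_layer_1:
  assumes "is_CRC C \<rho>" "crc_a C 0 = 0" "c \<in> C" "gadj w c"
  shows "w \<in> layer C 1"
proof -
  have "C \<noteq> {}" using assms(1) by (rule is_CRC_nonempty)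
  then have "card (nbrs c \<inter> C) = 0"
    using is_CRC_card_nbrs[of C \<rho> 0 0 c] assms(1-3) by (simp add: crc_a_def layer_0)
  then have "w \<notin> C"
    using assms(4) finite_nbrs[of c] by (auto simp: nbrs_def gadj_sym)
  moreover have "cdist C w \<le> 1"
    using cdist_le_gdist[OF assms(3), of w] assms(4) by (simp add: gdist_eq_l1norm gadj_iff_l1norm)
  ultimately show ?thesis
    using \<open>C \<noteq> {}\<close> by (auto simp: layer_def cdist_eq_0_iff le_Suc_eq)
qed

lemma card_code_nbrs_of_weight_1_le:
  assumes "is_CRC C \<rho>" "1 \<le> \<rho>" "crc_a C 0 = 0" "0 \<in> C"
    and "l1norm w = 1" "Y \<subseteq> nbrs w \<inter> C"
  shows "card (insert 0 Y) \<le> crc_c C 1"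
proof -
  have "gadj w 0" using assms(5) by (simp add: gadj_iff_l1norm)
  have "w \<in> layer C 1"
    using assms(1,3,4) \<open>gadj w 0\<close> by (rule nbr_of_codeword_in_layer_1)
  moreover have "insert 0 Y \<subseteq> nbrs w \<inter> C"
    using assms(4,6) \<open>gadj w 0\<close> by (auto simp: nbrs_def)
  ultimately show ?thesis
    using is_CRC_card_code_nbrs[OF assms(1,2)] card_mono finite_nbrs by (metis finite_Int)
qed

lemma weight_4_code_nbr:
  assumes CRC: "is_CRC C \<rho>" "1 \<le> \<rho>" "crc_a C 0 = 0" "crc_c C 1 \<le> 2" "0 \<in> C"
    and z: "z \<in> layer C 1" "l1norm z = 3"
    and x: "gadj z x" "l1norm x = 2" "x \<notin> C"
  shows "\<exists>y\<in>C. gadj z y \<and> l1norm y = 4"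
proof (rule ccontr)
  assume none: "\<not> ?thesis"
  have weight_2: "l1norm y = 2" if "y \<in> nbrs z \<inter> C" for y
    using that none gadj_l1norm_cases[of z y] z(2) by (auto simp: nbrs_def)
  obtain y1 where y1: "y1 \<in> nbrs z \<inter> C"
    using cdist_attained[OF is_CRC_nonempty[OF CRC(1)], of z] z(1)
    by (auto simp: layer_def nbrs_def gadj_iff_gdist)
  have "x \<noteq> y1" using x(3) y1 by blast
  then have "l1norm (x + y1 - z) = 1" "gadj (x + y1 - z) y1"
    using lower_nbrs_square[of z x y1] x y1 weight_2[OF y1] z(2) by (auto simp: nbrs_def)
  then have "card {0, y1} \<le> crc_c C 1"
    using card_code_nbrs_of_weight_1_le[OF CRC(1-3,5), of "x + y1 - z" "{y1}"] y1
    by (auto simp: nbrs_def)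
  moreover have "y1 \<noteq> 0" using weight_2[OF y1] by (auto simp: l1norm_def)
  ultimately have "2 \<le> card (nbrs z \<inter> C)"
    using is_CRC_card_code_nbrs[OF CRC(1,2) z(1)] by simp
  then have "\<not> nbrs z \<inter> C \<subseteq> {y1}"
    using card_mono[of "{y1}" "nbrs z \<inter> C"] by auto
  then obtain y2 where y2: "y2 \<in> nbrs z \<inter> C" "y2 \<noteq> y1" by blast
  then have "l1norm (y1 + y2 - z) = 1" "gadj (y1 + y2 - z) y1" "gadj (y1 + y2 - z) y2"
    using lower_nbrs_square[of z y1 y2] y1 weight_2[OF y1] weight_2[OF y2(1)] z(2)
    by (auto simp: nbrs_def)
  then have "card {0, y1, y2} \<le> crc_c C 1"
    using card_code_nbrs_of_weight_1_le[OF CRC(1-3,5), of "y1 + y2 - z" "{y1, y2}"] y1 y2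
    by (auto simp: nbrs_def)
  moreover have "y2 \<noteq> 0" using weight_2[OF y2(1)] by (auto simp: l1norm_def)
  ultimately show False
    using CRC(4) \<open>y1 \<noteq> 0\<close> y2(2) by simp
qed

lemma type_1100_upper_nbr_in_layer_1:
  assumes "is_CRC C \<rho>" "2 \<le> \<rho>" "3 \<le> crc_c C 2"
    and x: "type_1100 x" "x \<in> layer C 2"
  obtains z where "gadj x z" "z \<in> layer C 1" "l1norm z = 3"
proof -
  have "3 \<le> card (nbrs x \<inter> layer C 1)"
    using is_CRC_card_nbrs[of C \<rho> 2 1 x] assms by (simp add: crc_c_def)
  moreover have "card {v \<in> nbrs x. l1norm v < l1norm x} \<le> 2"
    using card_lower_nbrs_le_support[of x] x(1) by (simp add: type_1100_support type_1100_def)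
  ultimately have "\<not> nbrs x \<inter> layer C 1 \<subseteq> {v \<in> nbrs x. l1norm v < l1norm x}"
    using card_mono[of "{v \<in> nbrs x. l1norm v < l1norm x}" "nbrs x \<inter> layer C 1"] finite_nbrs[of x]
    by force
  then obtain z where z: "gadj x z" "z \<in> layer C 1" "\<not> l1norm z < l1norm x"
    by (auto simp: nbrs_def)
  moreover have "l1norm z = 3"
    using z(1,3) gadj_l1norm_cases[of x z] type_1100_l1norm[OF x(1)] by auto
  ultimately show ?thesis using that by blast
qed

lemma mem_interval_if_two_steps:
  assumes "gadj x z" "gadj z y" "l1norm y = l1norm x + 2"
  shows "x \<in> interval y"
proof (rule mem_intervalI)
  have "l1norm (y - x) \<le> l1norm (y - z) + l1norm (z - x)"
    using l1norm_triangle_ineq[of "y - z" "z - x"] by simp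
  with assms show "l1norm (y - x) \<le> l1norm y - l1norm x"
    by (simp add: gadj_iff_l1norm l1norm_minus_commute)
qed

theorem mainTheorem3:
  fixes C :: "(int^'n) set" and \<rho> :: nat
  assumes "CARD('n) \<ge> 2"
    and "is_CRC C \<rho>"
    and "r_null C 2"
    and "\<rho> \<ge> 2"
    and "crc_c C 1 \<le> 2"
    and "crc_c C 2 \<ge> 3"
    and "0 \<in> C"
  shows "\<forall>x. type_1100 x \<and> x \<in> layer C 2 \<longrightarrow>
           (\<exists>y\<in>C. weight y = 4 \<and> x \<in> interval y)"
proof (intro allI impI, elim conjE)
  fix x :: "int^'n"
  assume x: "type_1100 x" "x \<in> layer C 2"
  obtain z where z: "gadj x z" "z \<in> layer C 1" "l1norm z = 3"
    using type_1100_upper_nbr_in_layer_1[OF assms(2,4,6) x] .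
  have "x \<notin> C"
    using x(2) is_CRC_nonempty[OF assms(2)] by (auto simp: layer_def cdist_eq_0_iff[symmetric])
  moreover have "crc_a C 0 = 0" using assms(3) by (simp add: r_null_def)
    \<comment> \<open>the only consequence of 2-nullity needed\<close>
  ultimately obtain y where y: "y \<in> C" "gadj z y" "l1norm y = 4"
    using weight_4_code_nbr[OF assms(2) _ _ assms(5,7) z(2,3), of x] assms(4) z(1)
      type_1100_l1norm[OF x(1)] by (auto simp: gadj_sym)
  then have "x \<in> interval y"
    using z(1) type_1100_l1norm[OF x(1)] by (intro mem_interval_if_two_steps) auto
  with y show "\<exists>y\<in>C. weight y = 4 \<and> x \<in> interval y"
    by (intro bexI[of _ y]) (simp_all add: weight_eq_l1norm)
qed

end
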